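(* Let $A\in\mathbb{C}^{m\times n}$. Then there exists $X\in A\{1,4^{\mathfrak{m}}\}$ if and only if there exists $Y\in A\{1,2,4^{\mathfrak{m}}\}$.
   Context: For a positive integer $k$, the Minkowski metric matrix of order $k$ is $G_k=\mathrm{diag}(1,-I_{k-1})$ (with $G_1=(1)$). For $A\in\mathbb{C}^{m\times n}$, the Minkowski adjoint is $A^{\sim}=G_nA^*G_m$, where $A^*$ is the conjugate transpose. For $A\in\mathbb{C}^{m\times n}$ and $X\in\mathbb{C}^{n\times m}$ consider the equations $(1)\ AXA=A$, $(2)\ XAX=X$, $(3^{\mathfrak{m}})\ (AX)^{\sim}=AX$, $(4^{\mathfrak{m}})\ (XA)^{\sim}=XA$; $A\{i,\dots,k\}$ denotes the set of all $X$ satisfying the listed equations. *)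

theory Defs
  imports "Jordan_Normal_Form.Matrix" Complex_Main
begin

definition mink_G :: "nat \<Rightarrow> complex mat" where
  "mink_G k = mat k k (\<lambda>(i, j). if i = j then (if i = 0 then 1 else -1) else 0)"

definition conj_trans :: "complex mat \<Rightarrow> complex mat" where
  "conj_trans A = map_mat cnj (transpose_mat A)"

definition mink_adj :: "complex mat \<Rightarrow> complex mat" where
  "mink_adj A = mink_G (dim_col A) * conj_trans A * mink_G (dim_row A)"

end

theory Submission
  imports Defs
begin

text \<open>If \<open>X\<close> is an inner inverse of \<open>A\<close> (\<open>AXA = A\<close>), then \<open>Y = XAX\<close> is a reflexive
  inner inverse with \<open>YA = XA\<close>. Condition \<open>(4\<^sup>m)\<close> only involves the product \<open>XA\<close>, so it is
  inherited by \<open>Y\<close>; neither the Minkowski metric nor the positivity of \<open>m\<close>, \<open>n\<close> plays a role.\<close>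

lemma inner_inverse_mult_idem:
  fixes A X :: "'a::semiring_1 mat"
  assumes A: "A \<in> carrier_mat m n" and X: "X \<in> carrier_mat n m" and AXA: "A * X * A = A"
  shows "X * A * (X * A) = X * A"
proof -
  have "X * A * (X * A) = X * (A * X * A)"
    using assoc_mult_mat[OF X A mult_carrier_mat[OF X A]] assoc_mult_mat[OF A X A] by simp
  then show ?thesis using AXA by simp
qed

lemma inner_inverse_reflexive:
  fixes A X :: "'a::semiring_1 mat"
  assumes A: "A \<in> carrier_mat m n" and X: "X \<in> carrier_mat n m" and AXA: "A * X * A = A"
  shows "X * A * X * A = X * A"
    and "A * (X * A * X) * A = A"
    and "X * A * X * A * (X * A * X) = X * A * X"
proof -
  have idem: "X * A * (X * A) = X * A"
    using inner_inverse_mult_idem[OF assms] .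
  show XAXA: "X * A * X * A = X * A"
    using assoc_mult_mat[OF mult_carrier_mat[OF X A] X A] idem by simp
  show "A * (X * A * X) * A = A"
    using A X XAXA AXA by (metis assoc_mult_mat mult_carrier_mat)
  show "X * A * X * A * (X * A * X) = X * A * X"
    using A X XAXA idem by (metis assoc_mult_mat mult_carrier_mat)
qed

theorem theorem4p5:
  fixes A :: "complex mat" and m n :: nat
  assumes "0 < m" and "0 < n" and "A \<in> carrier_mat m n"
  shows "(\<exists>X \<in> carrier_mat n m. A * X * A = A \<and> mink_adj (X * A) = X * A)
     \<longleftrightarrow> (\<exists>Y \<in> carrier_mat n m. A * Y * A = A \<and> Y * A * Y = Y \<and> mink_adj (Y * A) = Y * A)"
proof
  assume "\<exists>X \<in> carrier_mat n m. A * X * A = A \<and> mink_adj (X * A) = X * A"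
  then obtain X where X: "X \<in> carrier_mat n m" and AXA: "A * X * A = A"
    and adj: "mink_adj (X * A) = X * A"
    by blast
  note reflexive = inner_inverse_reflexive[OF assms(3) X AXA]
  have "X * A * X \<in> carrier_mat n m"
    using X assms(3) by simp
  with reflexive adj show "\<exists>Y \<in> carrier_mat n m. A * Y * A = A \<and> Y * A * Y = Y \<and> mink_adj (Y * A) = Y * A"
    by (intro bexI[of _ "X * A * X"]) auto
qed blast

end
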